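(* Let $n\geq 1$ and let $x_1,\dots,x_n\in(0,\tfrac12]$ be not all equal. With $A_n,G_n,A'_n,G'_n$ and $I$ as in the context, put $R=\frac{\ln\frac{I(A'_n,G'_n)}{I(A_n,G_n)}}{\ln\sqrt{\frac{A'_nG'_n}{A_nG_n}}}$. Then $$\max\left\{\frac{{A'_n}^n-{G'_n}^n}{{A_n}^n-{G_n}^n}\left(\frac{A_nG_n}{A'_nG'_n}\right)^{\frac n2},\ \frac{A'_n-G'_n}{A_n-G_n}\left(\frac{A_nG_n}{A'_nG'_n}\right)^{\frac12}\right\}<\frac{\ln\frac{A'_n}{G'_n}}{\ln\frac{A_n}{G_n}}<\frac{A'_n-G'_n}{A_n-G_n}\,R<\min\left\{\frac{A'_n-G'_n}{A_n-G_n},\ R\right\}<1,$$ $$\frac{A'_n}{G'_n}<\left(\frac{A'_n}{G'_n}\right)^{1/R}<\left(\frac{A_n}{G_n}\right)^{\frac{A'_n-G'_n}{A_n-G_n}}<\frac{A_n}{G_n}<\left(\frac{A'_n}{G'_n}\right)^{\left(\frac{A'_nG'_n}{A_nG_n}\right)^{\frac n2}},$$ and $$\frac{{A'_n}^n-{G'_n}^n}{{A_n}^n-{G_n}^n}<\frac{(A'_nG'_n)^{\frac n2}\ln\frac{A'_n}{G'_n}}{(A_nG_n)^{\frac n2}\ln\frac{A_n}{G_n}}<\left(\frac{A'_nG'_n}{A_nG_n}\right)^{\frac n2}.$$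
   Context: $A_n=\frac1n\sum_{i=1}^n x_i$ and $G_n=\prod_{i=1}^n x_i^{1/n}$ are the arithmetic and geometric means of $x_1,\dots,x_n$; $A'_n=\frac1n\sum_{i=1}^n(1-x_i)$ and $G'_n=\prod_{i=1}^n(1-x_i)^{1/n}$ are the arithmetic and geometric means of $1-x_1,\dots,1-x_n$. For $u,v>0$ the identric mean is $I(u,v)=\frac{1}{e}\left(\frac{u^u}{v^v}\right)^{1/(u-v)}$ if $u\neq v$ and $I(u,u)=u$. *)

theory Defs
  imports Complex_Main
begin

text \<open>Means of x_1,...,x_n, where the sample is indexed by i < n (x 0, ..., x (n-1)).\<close>

definition AM :: "nat \<Rightarrow> (nat \<Rightarrow> real) \<Rightarrow> real" where
  "AM n x = (\<Sum>i<n. x i) / real n"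

definition GM :: "nat \<Rightarrow> (nat \<Rightarrow> real) \<Rightarrow> real" where
  "GM n x = (\<Prod>i<n. x i powr (1 / real n))"

definition AM' :: "nat \<Rightarrow> (nat \<Rightarrow> real) \<Rightarrow> real" where
  "AM' n x = (\<Sum>i<n. 1 - x i) / real n"

definition GM' :: "nat \<Rightarrow> (nat \<Rightarrow> real) \<Rightarrow> real" where
  "GM' n x = (\<Prod>i<n. (1 - x i) powr (1 / real n))"

definition identric :: "real \<Rightarrow> real \<Rightarrow> real" where
  "identric u v = (if u = v then u
     else (1 / exp 1) * ((u powr u) / (v powr v)) powr (1 / (u - v)))"

end

theory Submission
  imports Defs
begin

text \<open>Write \<open>A = exp (m + a)\<close>, \<open>G = exp (m - a)\<close>, \<open>A' = exp (m' + b)\<close>,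
  \<open>G' = exp (m' - b)\<close> and \<open>D = m' - m\<close>. Then \<open>A - G = 2 exp m sinh a\<close>,
  \<open>A\<^sup>n - G\<^sup>n = 2 exp (n m) sinh (n a)\<close> and \<open>ln (identric A G) = m + a coth a - 1\<close>, so every
  quantity of the chain is an expression in \<open>a, b, D\<close>, and the chain follows from
  \<open>0 < b < a \<le> D\<close>, \<open>exp D sinh b < sinh a\<close> and \<open>sinh (n a) \<le> exp (n D) sinh (n b)\<close>
  through the monotonicity of \<open>sinh s / s\<close> and of \<open>s coth s\<close>. For the sample these
  conditions come from \<open>A'/G' < A/G\<close> (Ky Fan), \<open>A \<le> 1/2 \<le> G' < A'\<close>, \<open>A' - G' < A - G\<close>
  and \<open>A\<^sup>n - G\<^sup>n \<le> A'\<^sup>n - G'\<^sup>n\<close>. They are proved by smoothing: replacing two entries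
  \<open>x i < c < x j\<close> by \<open>c\<close> and \<open>x i + x j - c\<close> keeps the arithmetic mean \<open>c\<close>, replacing them
  by \<open>c\<close> and \<open>x i x j / c\<close> keeps the geometric mean \<open>c\<close>, and each such move changes the
  relevant functional monotonically until all entries equal \<open>c\<close>.\<close>

section \<open>Smoothing a sample towards a mean\<close>

lemma smoothing_to_constant:
  fixes F :: "(nat \<Rightarrow> 'a) \<Rightarrow> 'b::preorder"
  assumes step: "\<And>x. P x \<Longrightarrow> \<not> (\<forall>k<n. x k = c) \<Longrightarrow>
      \<exists>y. P y \<and> {k. k < n \<and> y k \<noteq> c} \<subset> {k. k < n \<and> x k \<noteq> c} \<and> F x \<le> F y"
    and "P x"
  shows "\<exists>y. (\<forall>k<n. y k = c) \<and> F x \<le> F y"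
  using \<open>P x\<close>
proof (induction "card {k. k < n \<and> x k \<noteq> c}" arbitrary: x rule: less_induct)
  case less
  show ?case
  proof (cases "\<forall>k<n. x k = c")
    case False
    then obtain y where y: "P y" "{k. k < n \<and> y k \<noteq> c} \<subset> {k. k < n \<and> x k \<noteq> c}" "F x \<le> F y"
      using step[OF less.prems] by blast
    have "card {k. k < n \<and> y k \<noteq> c} < card {k. k < n \<and> x k \<noteq> c}"
      using y(2) by (intro psubset_card_mono) auto
    with less.hyps y(1) obtain z where "\<forall>k<n. z k = c" "F y \<le> F z" by blast
    with y(3) show ?thesis using order_trans by blast
  qed auto
qed

lemma smoothing_to_constant_strict:
  fixes F :: "(nat \<Rightarrow> 'a) \<Rightarrow> 'b::preorder"
  assumes step: "\<And>x. P x \<Longrightarrow> \<not> (\<forall>k<n. x k = c) \<Longrightarrow>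
      \<exists>y. P y \<and> {k. k < n \<and> y k \<noteq> c} \<subset> {k. k < n \<and> x k \<noteq> c} \<and> F x < F y"
    and "P x" "\<not> (\<forall>k<n. x k = c)"
  shows "\<exists>y. (\<forall>k<n. y k = c) \<and> F x < F y"
proof -
  from step[OF assms(2,3)] obtain y where "P y" "F x < F y" by blast
  moreover have "\<exists>z. (\<forall>k<n. z k = c) \<and> F y \<le> F z"
  proof (rule smoothing_to_constant[of P n c F, OF _ \<open>P y\<close>])
    fix z assume "P z" "\<not> (\<forall>k<n. z k = c)"
    from step[OF this] obtain w
      where "P w" "{k. k < n \<and> w k \<noteq> c} \<subset> {k. k < n \<and> z k \<noteq> c}" "F z < F w"
      by blast
    then show "\<exists>w. P w \<and> {k. k < n \<and> w k \<noteq> c} \<subset> {k. k < n \<and> z k \<noteq> c} \<and> F z \<le> F w"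
      using less_imp_le by blast
  qed
  ultimately show ?thesis using less_le_trans by blast
qed

lemma support_fun_upd_psubset:
  assumes "i < n" "i \<noteq> j" "x i \<noteq> c" "x j \<noteq> c"
  shows "{k. k < n \<and> (x(i := c, j := b)) k \<noteq> c} \<subset> {k. k < n \<and> x k \<noteq> c}"
  using assms by auto

lemma sum_fun_upd_pair:
  fixes x :: "'i \<Rightarrow> 'a::comm_monoid_add" and I :: "'i set"
  assumes "finite I" "i \<in> I" "j \<in> I" "i \<noteq> j"
  shows "(\<Sum>k\<in>I. (x(i := a, j := b)) k) = a + b + (\<Sum>k\<in>I - {i} - {j}. x k)"
    and "(\<Sum>k\<in>I. x k) = x i + x j + (\<Sum>k\<in>I - {i} - {j}. x k)"
proof -
  have split: "sum f I = f i + f j + sum f (I - {i} - {j})" for f :: "'i \<Rightarrow> 'a"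
    using assms sum.remove[of I i f] sum.remove[of "I - {i}" j f] by (simp add: add.assoc)
  show "(\<Sum>k\<in>I. x k) = x i + x j + (\<Sum>k\<in>I - {i} - {j}. x k)" by (rule split)
  have "(\<Sum>k\<in>I - {i} - {j}. (x(i := a, j := b)) k) = (\<Sum>k\<in>I - {i} - {j}. x k)"
    by (rule sum.cong) auto
  then show "(\<Sum>k\<in>I. (x(i := a, j := b)) k) = a + b + (\<Sum>k\<in>I - {i} - {j}. x k)"
    using assms(4) unfolding split[of "x(i := a, j := b)"] by simp
qed

lemma prod_fun_upd_pair:
  fixes g :: "'a \<Rightarrow> 'b::comm_monoid_mult" and I :: "'i set"
  assumes "finite I" "i \<in> I" "j \<in> I" "i \<noteq> j"
  shows "(\<Prod>k\<in>I. g ((x(i := a, j := b)) k)) = g a * g b * (\<Prod>k\<in>I - {i} - {j}. g (x k))"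
    and "(\<Prod>k\<in>I. g (x k)) = g (x i) * g (x j) * (\<Prod>k\<in>I - {i} - {j}. g (x k))"
proof -
  have split: "prod f I = f i * f j * prod f (I - {i} - {j})" for f :: "'i \<Rightarrow> 'b"
    using assms prod.remove[of I i f] prod.remove[of "I - {i}" j f] by (simp add: mult.assoc)
  show "(\<Prod>k\<in>I. g (x k)) = g (x i) * g (x j) * (\<Prod>k\<in>I - {i} - {j}. g (x k))" by (rule split)
  have "(\<Prod>k\<in>I - {i} - {j}. g ((x(i := a, j := b)) k)) = (\<Prod>k\<in>I - {i} - {j}. g (x k))"
    by (rule prod.cong) auto
  then show "(\<Prod>k\<in>I. g ((x(i := a, j := b)) k)) = g a * g b * (\<Prod>k\<in>I - {i} - {j}. g (x k))"
    using assms(4) unfolding split[of "\<lambda>k. g ((x(i := a, j := b)) k)"] by simp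
qed

lemma exists_below_above_mean:
  fixes x :: "nat \<Rightarrow> real"
  assumes sum: "(\<Sum>k<n. x k) = real n * c" and ne: "\<not> (\<forall>k<n. x k = c)"
  shows "\<exists>i<n. \<exists>j<n. x i < c \<and> c < x j"
proof -
  have const: "(\<Sum>k<n. x k) = (\<Sum>k<n. c)" using sum by simp
  have "\<exists>i<n. x i < c"
  proof (rule ccontr)
    assume "\<not> (\<exists>i<n. x i < c)"
    then have "(\<Sum>k<n. c) < (\<Sum>k<n. x k)"
      using ne by (intro sum_strict_mono_ex1) force+
    then show False using const by simp
  qed
  moreover have "\<exists>j<n. c < x j"
  proof (rule ccontr)
    assume "\<not> (\<exists>j<n. c < x j)"
    then have "(\<Sum>k<n. x k) < (\<Sum>k<n. c)"
      using ne by (intro sum_strict_mono_ex1) force+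
    then show False using const by simp
  qed
  ultimately show ?thesis by blast
qed

lemma mean_smoothing_move:
  fixes x :: "nat \<Rightarrow> real"
  assumes S: "\<And>u w. u \<in> S \<Longrightarrow> w \<in> S \<Longrightarrow> {u..w} \<subseteq> S"
    and x: "\<forall>k<n. x k \<in> S" and sum: "(\<Sum>k<n. x k) = real n * c"
    and ne: "\<not> (\<forall>k<n. x k = c)"
  obtains i j where "i < n" "j < n" "x i < c" "c < x j"
    and "\<forall>k<n. (x(i := c, j := x i + x j - c)) k \<in> S"
    and "(\<Sum>k<n. (x(i := c, j := x i + x j - c)) k) = real n * c"
    and "{k. k < n \<and> (x(i := c, j := x i + x j - c)) k \<noteq> c} \<subset> {k. k < n \<and> x k \<noteq> c}"
proof -
  obtain i j where ij: "i < n" "j < n" "x i < c" "c < x j"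
    using exists_below_above_mean[OF sum ne] by blast
  then have "i \<noteq> j" by auto
  have "{x i..x j} \<subseteq> S" using S x ij by blast
  then have "\<forall>k<n. (x(i := c, j := x i + x j - c)) k \<in> S"
    using x ij by auto
  moreover have "(\<Sum>k<n. (x(i := c, j := x i + x j - c)) k) = real n * c"
    using sum sum_fun_upd_pair[where I = "{..<n}" and x = x] ij \<open>i \<noteq> j\<close> by simp
  moreover have "{k. k < n \<and> (x(i := c, j := x i + x j - c)) k \<noteq> c} \<subset> {k. k < n \<and> x k \<noteq> c}"
    using ij \<open>i \<noteq> j\<close> by (intro support_fun_upd_psubset) auto
  ultimately show ?thesis using that ij by blast
qed

lemma mean_smoothing:
  fixes F :: "(nat \<Rightarrow> real) \<Rightarrow> 'b::preorder"
  assumes S: "\<And>u w. u \<in> S \<Longrightarrow> w \<in> S \<Longrightarrow> {u..w} \<subseteq> S"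
    and x: "\<forall>k<n. x k \<in> S" "(\<Sum>k<n. x k) = real n * c"
    and step: "\<And>x i j. \<forall>k<n. x k \<in> S \<Longrightarrow> i < n \<Longrightarrow> j < n \<Longrightarrow> x i < c \<Longrightarrow> c < x j \<Longrightarrow>
      F x \<le> F (x(i := c, j := x i + x j - c))"
  shows "\<exists>y. (\<forall>k<n. y k = c) \<and> F x \<le> F y"
proof (rule smoothing_to_constant[where P = "\<lambda>x. (\<forall>k<n. x k \<in> S) \<and> (\<Sum>k<n. x k) = real n * c"])
  fix x assume P: "(\<forall>k<n. x k \<in> S) \<and> (\<Sum>k<n. x k) = real n * c" and ne: "\<not> (\<forall>k<n. x k = c)"
  obtain i j where ij: "i < n" "j < n" "x i < c" "c < x j"
    and "\<forall>k<n. (x(i := c, j := x i + x j - c)) k \<in> S"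
      "(\<Sum>k<n. (x(i := c, j := x i + x j - c)) k) = real n * c"
      "{k. k < n \<and> (x(i := c, j := x i + x j - c)) k \<noteq> c} \<subset> {k. k < n \<and> x k \<noteq> c}"
    using mean_smoothing_move[OF S conjunct1[OF P] conjunct2[OF P] ne] .
  moreover have "F x \<le> F (x(i := c, j := x i + x j - c))"
    using step[OF conjunct1[OF P] ij] .
  ultimately show "\<exists>y. ((\<forall>k<n. y k \<in> S) \<and> (\<Sum>k<n. y k) = real n * c) \<and>
      {k. k < n \<and> y k \<noteq> c} \<subset> {k. k < n \<and> x k \<noteq> c} \<and> F x \<le> F y"
    by blast
qed (use x in simp)

lemma mean_smoothing_strict:
  fixes F :: "(nat \<Rightarrow> real) \<Rightarrow> 'b::preorder"
  assumes S: "\<And>u w. u \<in> S \<Longrightarrow> w \<in> S \<Longrightarrow> {u..w} \<subseteq> S"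
    and x: "\<forall>k<n. x k \<in> S" "(\<Sum>k<n. x k) = real n * c" and ne: "\<not> (\<forall>k<n. x k = c)"
    and step: "\<And>x i j. \<forall>k<n. x k \<in> S \<Longrightarrow> i < n \<Longrightarrow> j < n \<Longrightarrow> x i < c \<Longrightarrow> c < x j \<Longrightarrow>
      F x < F (x(i := c, j := x i + x j - c))"
  shows "\<exists>y. (\<forall>k<n. y k = c) \<and> F x < F y"
proof (rule smoothing_to_constant_strict[where P = "\<lambda>x. (\<forall>k<n. x k \<in> S) \<and> (\<Sum>k<n. x k) = real n * c"])
  fix x assume P: "(\<forall>k<n. x k \<in> S) \<and> (\<Sum>k<n. x k) = real n * c" and ne: "\<not> (\<forall>k<n. x k = c)"
  obtain i j where ij: "i < n" "j < n" "x i < c" "c < x j"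
    and "\<forall>k<n. (x(i := c, j := x i + x j - c)) k \<in> S"
      "(\<Sum>k<n. (x(i := c, j := x i + x j - c)) k) = real n * c"
      "{k. k < n \<and> (x(i := c, j := x i + x j - c)) k \<noteq> c} \<subset> {k. k < n \<and> x k \<noteq> c}"
    using mean_smoothing_move[OF S conjunct1[OF P] conjunct2[OF P] ne] .
  moreover have "F x < F (x(i := c, j := x i + x j - c))"
    using step[OF conjunct1[OF P] ij] .
  ultimately show "\<exists>y. ((\<forall>k<n. y k \<in> S) \<and> (\<Sum>k<n. y k) = real n * c) \<and>
      {k. k < n \<and> y k \<noteq> c} \<subset> {k. k < n \<and> x k \<noteq> c} \<and> F x < F y"
    by blast
qed (use x ne in simp_all)

lemma exists_min_below_above_geometric_mean:
  fixes x :: "nat \<Rightarrow> real"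
  assumes pos: "\<forall>k<n. 0 < x k" and c: "0 < c" and prod: "(\<Prod>k<n. x k) = c ^ n"
    and ne: "\<not> (\<forall>k<n. x k = c)"
  shows "\<exists>i<n. \<exists>j<n. x i < c \<and> c < x j \<and> (\<forall>k<n. x i \<le> x k)"
proof -
  obtain k0 where k0: "k0 < n" "x k0 \<noteq> c" using ne by blast
  obtain i where i: "i < n" "\<forall>k<n. x i \<le> x k"
    using Min_in[of "x ` {..<n}"] Min_le[of "x ` {..<n}"] k0 by fastforce
  have const: "(\<Prod>k<n. x k) = (\<Prod>k<n. c)" using prod by simp
  have xi: "x i < c"
  proof (rule ccontr)
    assume "\<not> x i < c"
    then have "\<forall>k<n. c \<le> x k" using i by force
    then have "(\<Prod>k<n. c) < (\<Prod>k<n. x k)"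
      using c k0 by (intro prod_mono_strict[of k0]) force+
    then show False using const by simp
  qed
  have "\<exists>j<n. c < x j"
  proof (rule ccontr)
    assume "\<not> (\<exists>j<n. c < x j)"
    then have "(\<Prod>k<n. x k) < (\<Prod>k<n. c)"
      using pos xi i by (intro prod_mono_strict[of i]) (force simp: less_imp_le)+
    then show False using const by simp
  qed
  then show ?thesis using i xi by blast
qed

lemma geometric_smoothing_move:
  fixes x :: "nat \<Rightarrow> real"
  assumes S: "\<And>u w. u \<in> S \<Longrightarrow> w \<in> S \<Longrightarrow> {u..w} \<subseteq> S" and S_pos: "S \<subseteq> {0<..}"
    and x: "\<forall>k<n. x k \<in> S" and c: "0 < c" and prod: "(\<Prod>k<n. x k) = c ^ n"
    and ne: "\<not> (\<forall>k<n. x k = c)"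
  obtains i j where "i < n" "j < n" "x i < c" "c < x j" "\<forall>k<n. x i \<le> x k"
    and "\<forall>k<n. (x(i := c, j := x i * x j / c)) k \<in> S"
    and "(\<Prod>k<n. (x(i := c, j := x i * x j / c)) k) = c ^ n"
    and "{k. k < n \<and> (x(i := c, j := x i * x j / c)) k \<noteq> c} \<subset> {k. k < n \<and> x k \<noteq> c}"
proof -
  have pos: "\<forall>k<n. 0 < x k" using x S_pos by auto
  obtain i j where ij: "i < n" "j < n" "x i < c" "c < x j" and min: "\<forall>k<n. x i \<le> x k"
    using exists_min_below_above_geometric_mean[OF pos c prod ne] by blast
  then have "i \<noteq> j" by auto
  have "x i * x j / c \<in> {x i..x j}" using ij pos c by (auto simp: field_simps)
  moreover have "{x i..x j} \<subseteq> S" using S x ij by blast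
  ultimately have "\<forall>k<n. (x(i := c, j := x i * x j / c)) k \<in> S"
    using x ij by auto
  moreover have "(\<Prod>k<n. (x(i := c, j := x i * x j / c)) k) = c ^ n"
    using prod prod_fun_upd_pair[where I = "{..<n}" and g = "\<lambda>t. t" and x = x] ij \<open>i \<noteq> j\<close> c
    by simp
  moreover have "{k. k < n \<and> (x(i := c, j := x i * x j / c)) k \<noteq> c} \<subset> {k. k < n \<and> x k \<noteq> c}"
    using ij \<open>i \<noteq> j\<close> by (intro support_fun_upd_psubset) auto
  ultimately show ?thesis using that ij min by blast
qed

lemma geometric_smoothing_strict:
  fixes F :: "(nat \<Rightarrow> real) \<Rightarrow> 'b::preorder"
  assumes S: "\<And>u w. u \<in> S \<Longrightarrow> w \<in> S \<Longrightarrow> {u..w} \<subseteq> S" and S_pos: "S \<subseteq> {0<..}"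
    and x: "\<forall>k<n. x k \<in> S" "(\<Prod>k<n. x k) = c ^ n" and c: "0 < c" and ne: "\<not> (\<forall>k<n. x k = c)"
    and step: "\<And>x i j. \<forall>k<n. x k \<in> S \<Longrightarrow> i < n \<Longrightarrow> j < n \<Longrightarrow> x i < c \<Longrightarrow> c < x j \<Longrightarrow>
      \<forall>k<n. x i \<le> x k \<Longrightarrow> F x < F (x(i := c, j := x i * x j / c))"
  shows "\<exists>y. (\<forall>k<n. y k = c) \<and> F x < F y"
proof (rule smoothing_to_constant_strict[where P = "\<lambda>x. (\<forall>k<n. x k \<in> S) \<and> (\<Prod>k<n. x k) = c ^ n"])
  fix x assume P: "(\<forall>k<n. x k \<in> S) \<and> (\<Prod>k<n. x k) = c ^ n" and ne: "\<not> (\<forall>k<n. x k = c)"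
  obtain i j where ij: "i < n" "j < n" "x i < c" "c < x j" "\<forall>k<n. x i \<le> x k"
    and "\<forall>k<n. (x(i := c, j := x i * x j / c)) k \<in> S"
      "(\<Prod>k<n. (x(i := c, j := x i * x j / c)) k) = c ^ n"
      "{k. k < n \<and> (x(i := c, j := x i * x j / c)) k \<noteq> c} \<subset> {k. k < n \<and> x k \<noteq> c}"
    using geometric_smoothing_move[OF S S_pos conjunct1[OF P] c conjunct2[OF P] ne] .
  moreover have "F x < F (x(i := c, j := x i * x j / c))"
    using step[OF conjunct1[OF P] ij] .
  ultimately show "\<exists>y. ((\<forall>k<n. y k \<in> S) \<and> (\<Prod>k<n. y k) = c ^ n) \<and>
      {k. k < n \<and> y k \<noteq> c} \<subset> {k. k < n \<and> x k \<noteq> c} \<and> F x < F y"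
    by blast
qed (use x ne in simp_all)

lemma mult_less_smoothed_mult:
  fixes u v c :: real
  assumes "u < c" "c < v"
  shows "u * v < c * (u + v - c)"
proof -
  have "0 < (c - u) * (v - c)" using assms by simp
  then show ?thesis by (simp add: algebra_simps)
qed

lemma prod_less_power_of_mean:
  fixes g :: "real \<Rightarrow> real" and x :: "nat \<Rightarrow> real"
  assumes S: "\<And>u w. u \<in> S \<Longrightarrow> w \<in> S \<Longrightarrow> {u..w} \<subseteq> S"
    and pos: "\<And>t. t \<in> S \<Longrightarrow> 0 < g t"
    and pair: "\<And>u v. u \<in> S \<Longrightarrow> v \<in> S \<Longrightarrow> u < c \<Longrightarrow> c < v \<Longrightarrow> g u * g v < g c * g (u + v - c)"
    and x: "\<forall>k<n. x k \<in> S" "(\<Sum>k<n. x k) = real n * c" and ne: "\<not> (\<forall>k<n. x k = c)"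
  shows "(\<Prod>k<n. g (x k)) < g c ^ n"
proof -
  have "\<exists>y. (\<forall>k<n. y k = c) \<and> (\<Prod>k<n. g (x k)) < (\<Prod>k<n. g (y k))"
  proof (rule mean_smoothing_strict[OF S x ne])
    fix x i j assume x: "\<forall>k<n. x k \<in> S" and ij: "i < n" "j < n" "x i < c" "c < x j"
    then have "i \<noteq> j" by auto
    have "0 < (\<Prod>k\<in>{..<n} - {i} - {j}. g (x k))" using x pos by (intro prod_pos) auto
    then show "(\<Prod>k<n. g (x k)) < (\<Prod>k<n. g ((x(i := c, j := x i + x j - c)) k))"
      using pair[of "x i" "x j"] x ij \<open>i \<noteq> j\<close>
      by (simp add: prod_fun_upd_pair[where I = "{..<n}" and g = g])
  qed
  then show ?thesis by auto
qed

lemma prod_one_minus_diff_le_power_diff: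
  fixes x :: "nat \<Rightarrow> real"
  assumes x: "\<forall>k<n. x k \<in> {0..1/2}" "(\<Sum>k<n. x k) = real n * c"
  shows "(\<Prod>k<n. 1 - x k) - (\<Prod>k<n. x k) \<le> (1 - c) ^ n - c ^ n"
proof -
  have "\<exists>y. (\<forall>k<n. y k = c) \<and>
      (\<Prod>k<n. 1 - x k) - (\<Prod>k<n. x k) \<le> (\<Prod>k<n. 1 - y k) - (\<Prod>k<n. y k)"
  proof (rule mean_smoothing[OF _ x])
    fix x i j assume x: "\<forall>k<n. x k \<in> {0..1/2}" and ij: "i < n" "j < n" "x i < c" "c < x j"
    then have "i \<noteq> j" by auto
    define r where "r = (\<Prod>k\<in>{..<n} - {i} - {j}. x k)"
    define r' where "r' = (\<Prod>k\<in>{..<n} - {i} - {j}. 1 - x k)"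
    define d where "d = (c - x i) * (x j - c)"
    have "r \<le> r'" unfolding r_def r'_def using x by (intro prod_mono) auto
    moreover have "0 \<le> d" using ij by (simp add: d_def)
    ultimately have "(1 - x i) * (1 - x j) * r' - x i * x j * r
        \<le> ((1 - x i) * (1 - x j) + d) * r' - (x i * x j + d) * r"
      by (simp add: algebra_simps mult_left_mono)
    also have "\<dots> = (1 - c) * (1 - (x i + x j - c)) * r' - c * (x i + x j - c) * r"
      by (simp add: d_def algebra_simps)
    finally show "(\<Prod>k<n. 1 - x k) - (\<Prod>k<n. x k)
        \<le> (\<Prod>k<n. 1 - (x(i := c, j := x i + x j - c)) k) - (\<Prod>k<n. (x(i := c, j := x i + x j - c)) k)"
      using ij \<open>i \<noteq> j\<close> unfolding r_def r'_def
      by (simp add: prod_fun_upd_pair[where I = "{..<n}" and g = "\<lambda>t. t"]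
          prod_fun_upd_pair[where I = "{..<n}" and g = "\<lambda>t. 1 - t"])
  qed auto
  then show ?thesis by auto
qed

section \<open>Inequalities between the means of the sample\<close>

lemma AM'_eq_AM: "AM' n x = AM n (\<lambda>i. 1 - x i)"
  by (simp add: AM'_def AM_def)

lemma GM'_eq_GM: "GM' n x = GM n (\<lambda>i. 1 - x i)"
  by (simp add: GM'_def GM_def)

lemma sum_eq_mult_AM: "0 < n \<Longrightarrow> (\<Sum>k<n. x k) = real n * AM n x"
  by (simp add: AM_def)

lemma AM'_eq_one_minus_AM: "0 < n \<Longrightarrow> AM' n x = 1 - AM n x"
  by (simp add: AM'_def AM_def sum_subtractf diff_divide_distrib)

lemma GM_pos: "\<forall>k<n. 0 < x k \<Longrightarrow> 0 < GM n x"
  unfolding GM_def by (intro prod_pos) auto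

lemma GM_power:
  assumes "0 < n" "\<forall>k<n. 0 < x k"
  shows "GM n x ^ n = (\<Prod>k<n. x k)"
proof -
  have "0 < (\<Prod>k<n. x k)" using assms(2) by (intro prod_pos) simp
  then have "((\<Prod>k<n. x k) powr (1 / real n)) ^ n = (\<Prod>k<n. x k)"
    using assms by (subst powr_power) auto
  then show ?thesis by (simp add: GM_def flip: prod_powr_distrib)
qed

lemma GM'_power:
  assumes "0 < n" "\<forall>k<n. x k < 1"
  shows "GM' n x ^ n = (\<Prod>k<n. 1 - x k)"
  using assms GM_power[of n "\<lambda>k. 1 - x k"] by (simp add: GM'_eq_GM)

lemma GM'_pos: "\<forall>k<n. x k < 1 \<Longrightarrow> 0 < GM' n x"
  using GM_pos[of n "\<lambda>k. 1 - x k"] by (simp add: GM'_eq_GM)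

lemma GM_less_AM:
  fixes x :: "nat \<Rightarrow> real"
  assumes pos: "\<forall>k<n. 0 < x k" and ne: "\<exists>i<n. \<exists>j<n. x i \<noteq> x j"
  shows "GM n x < AM n x"
proof -
  have n: "0 < n" using ne by auto
  have ne_mean: "\<not> (\<forall>k<n. x k = AM n x)" using ne by metis
  have "(\<Prod>k<n. x k) < AM n x ^ n"
    using pos mult_less_smoothed_mult sum_eq_mult_AM[OF n] ne_mean
    by (intro prod_less_power_of_mean[where S = "{0<..}" and g = "\<lambda>t. t"]) auto
  then have "GM n x ^ n < AM n x ^ n" using GM_power[OF n pos] by simp
  moreover have "0 \<le> AM n x"
    using pos unfolding AM_def by (intro divide_nonneg_nonneg sum_nonneg) (simp_all add: less_imp_le)
  ultimately show ?thesis by (rule power_less_imp_less_base)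
qed

lemma AM_le_half:
  assumes "0 < n" "\<forall>k<n. x k \<le> 1/2"
  shows "AM n x \<le> 1/2"
proof -
  have "(\<Sum>k<n. x k) \<le> (\<Sum>k<n. 1/2)" using assms(2) by (intro sum_mono) auto
  then show ?thesis using assms(1) by (simp add: AM_def field_simps)
qed

lemma odds_mult_less_smoothed:
  fixes u v c :: real
  assumes "0 < u" "u < c" "c < v" "v \<le> 1/2"
  shows "u / (1 - u) * (v / (1 - v)) < c / (1 - c) * ((u + v - c) / (1 - (u + v - c)))"
proof -
  define s p p' where "s = u + v" and "p = u * v" and "p' = c * (s - c)"
  have "p < p'" using mult_less_smoothed_mult[OF assms(2,3)] by (simp add: p_def p'_def s_def)
  moreover have "0 < 1 - s" "0 < p" using assms by (simp_all add: s_def p_def)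
  ultimately have "p * (1 - s) < p' * (1 - s)" "0 < 1 - s + p" "0 < 1 - s + p'" by simp_all
  then have "p / (1 - s + p) < p' / (1 - s + p')"
    by (simp add: field_simps)
  moreover have "(1 - u) * (1 - v) = 1 - s + p" "(1 - c) * (1 - (s - c)) = 1 - s + p'"
    by (simp_all add: s_def p_def p'_def algebra_simps)
  ultimately show ?thesis by (simp add: s_def p_def p'_def)
qed

lemma AM'_div_GM'_less:
  fixes x :: "nat \<Rightarrow> real"
  assumes x: "\<forall>k<n. x k \<in> {0<..1/2}" and ne: "\<exists>i<n. \<exists>j<n. x i \<noteq> x j"
  shows "AM' n x / GM' n x < AM n x / GM n x"
proof -
  have n: "0 < n" using ne by auto
  have pos: "\<forall>k<n. 0 < x k" "\<forall>k<n. 0 < 1 - x k" using x by auto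
  have ne_mean: "\<not> (\<forall>k<n. x k = AM n x)" using ne by metis
  have A: "0 < AM n x" "AM n x < 1"
    using GM_less_AM[OF pos(1) ne] GM_pos[OF pos(1)] AM_le_half[OF n] x by force+
  have "(\<Prod>k<n. x k / (1 - x k)) < (AM n x / (1 - AM n x)) ^ n"
    using x odds_mult_less_smoothed sum_eq_mult_AM[OF n] ne_mean
    by (intro prod_less_power_of_mean[where S = "{0<..1/2}" and g = "\<lambda>t. t / (1 - t)"]) auto
  then have "(GM n x / GM' n x) ^ n < (AM n x / AM' n x) ^ n"
    using GM_power[OF n pos(1)] GM_power[OF n pos(2)]
    by (simp add: prod_dividef power_divide GM'_eq_GM AM'_eq_one_minus_AM[OF n])
  moreover have "0 \<le> AM n x / AM' n x" using A by (simp add: AM'_eq_one_minus_AM[OF n])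
  ultimately have "GM n x / GM' n x < AM n x / AM' n x" by (rule power_less_imp_less_base)
  then show ?thesis
    using A GM_pos[OF pos(1)] GM_pos[OF pos(2)]
    by (simp add: AM'_eq_one_minus_AM[OF n] GM'_eq_GM field_simps)
qed

lemma AM_power_diff_le:
  fixes x :: "nat \<Rightarrow> real"
  assumes n: "0 < n" and x: "\<forall>k<n. x k \<in> {0<..1/2}"
  shows "AM n x ^ n - GM n x ^ n \<le> AM' n x ^ n - GM' n x ^ n"
proof -
  have "(\<Prod>k<n. 1 - x k) - (\<Prod>k<n. x k) \<le> (1 - AM n x) ^ n - AM n x ^ n"
    using x sum_eq_mult_AM[OF n] by (intro prod_one_minus_diff_le_power_diff) auto
  moreover have "\<forall>k<n. 0 < x k" "\<forall>k<n. x k < 1" using x by auto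
  then have "GM n x ^ n = (\<Prod>k<n. x k)" "GM' n x ^ n = (\<Prod>k<n. 1 - x k)"
    using GM_power[OF n] GM'_power[OF n] by blast+
  ultimately show ?thesis by (simp add: AM'_eq_one_minus_AM[OF n])
qed

lemma half_le_GM':
  assumes n: "0 < n" and x: "\<forall>k<n. x k \<in> {0<..1/2}"
  shows "1/2 \<le> GM' n x"
proof -
  have "(1/2) ^ n = (\<Prod>k<n. 1/2 :: real)" by simp
  also have "\<dots> \<le> (\<Prod>k<n. 1 - x k)" using x by (intro prod_mono) auto
  also have "\<dots> = GM' n x ^ n"
    using x GM'_power[OF n, of x] by force
  finally show ?thesis using n GM'_pos[of n x] x
    by (force intro: power_le_imp_le_base[of _ n])
qed

lemma Bernoulli_inequality_root:
  assumes t: "0 \<le> t" and n: "0 < n"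
  shows "(1 + t) powr (1 / real n) \<le> 1 + t / real n"
proof -
  have pos: "0 < 1 + t / real n" using t n by (simp add: add_pos_nonneg)
  have "1 + t \<le> (1 + t / real n) ^ n"
    using Bernoulli_inequality[of "t / real n" n] t n by (simp add: order_trans[OF _ divide_nonneg_nonneg])
  then have "(1 + t) powr (1 / real n) \<le> ((1 + t / real n) ^ n) powr (1 / real n)"
    using t by (intro powr_mono2) auto
  also have "\<dots> = 1 + t / real n"
    using pos n by (simp add: powr_realpow[OF pos, symmetric] powr_powr)
  finally show ?thesis .
qed

lemma GM'_eq_root: "GM' n x = (\<Prod>k<n. 1 - x k) powr (1 / real n)"
  by (simp add: GM'_def prod_powr_distrib)

lemma GM'_less_one_minus_min:
  fixes x :: "nat \<Rightarrow> real"
  assumes x: "\<forall>k<n. x k < 1" and ij: "i < n" "j < n" "x i < x j" and min: "\<forall>k<n. x i \<le> x k"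
  shows "GM' n x < 1 - x i"
proof -
  have n: "0 < n" using ij by simp
  have "GM' n x ^ n = (\<Prod>k<n. 1 - x k)" using GM'_power[OF n x] .
  also have "\<dots> < (\<Prod>k<n. 1 - x i)"
  proof (rule prod_mono_strict[of j])
    fix k assume "k \<in> {..<n}"
    then show "0 \<le> 1 - x k \<and> 1 - x k \<le> 1 - x i" "0 < 1 - x i"
      using x min ij(1) by (simp_all add: less_imp_le)
  qed (use ij in auto)
  finally have "GM' n x ^ n < (1 - x i) ^ n" by simp
  moreover have "0 \<le> 1 - x i" using x ij by (simp add: less_imp_le)
  ultimately show ?thesis by (rule power_less_imp_less_base)
qed

lemma GM'_le_of_prod_growth:
  assumes n: "0 < n" and t: "0 \<le> t" and growth: "(\<Prod>k<n. 1 - y k) = (\<Prod>k<n. 1 - x k) * (1 + t)"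
  shows "GM' n y \<le> GM' n x * (1 + t / real n)"
proof -
  have "GM' n y = GM' n x * (1 + t) powr (1 / real n)"
    using t by (simp add: growth GM'_eq_root powr_mult)
  moreover have "0 \<le> GM' n x" by (simp add: GM'_eq_root)
  ultimately show ?thesis using Bernoulli_inequality_root[OF t n] by (simp add: mult_left_mono)
qed

lemma prod_one_minus_geometric_move:
  fixes x :: "nat \<Rightarrow> real"
  assumes ij: "i < n" "j < n" "i \<noteq> j" and c: "c \<noteq> 0" and x: "x i \<noteq> 1" "x j \<noteq> 1"
  shows "(\<Prod>k<n. 1 - (x(i := c, j := x i * x j / c)) k)
    = (\<Prod>k<n. 1 - x k) * (1 + (c - x i) * (x j - c) / (c * ((1 - x i) * (1 - x j))))"
proof -
  have "(1 - x i) * (1 - x j) \<noteq> 0" using x by simp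
  then have "(1 - x i) * (1 - x j) * (1 + (c - x i) * (x j - c) / (c * ((1 - x i) * (1 - x j))))
      = (1 - x i) * (1 - x j) + (c - x i) * (x j - c) / c"
    by (simp add: distrib_left)
  also have "\<dots> = (1 - c) * (1 - x i * x j / c)" using c by (simp add: field_simps)
  finally show ?thesis
    using ij by (simp add: prod_fun_upd_pair[where I = "{..<n}" and g = "\<lambda>t. 1 - t"])
qed

text \<open>The sum drops by \<open>d = (c - x i) (x j - c) / c\<close>, while \<open>\<Prod>k<n. 1 - x k\<close> grows by
  the factor \<open>1 + t\<close> with \<open>(1 - x i) t = d / (1 - x j) \<le> 2 d\<close>; as \<open>G' < 1 - x i\<close>, Bernoulli's
  inequality makes \<open>G'\<close> grow by less than \<open>2 d / n\<close>.\<close>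
lemma GM'_plus_twice_AM_smoothing_less:
  fixes x :: "nat \<Rightarrow> real"
  assumes x: "\<forall>k<n. x k \<in> {0<..1/2}" and c: "0 < c"
    and ij: "i < n" "j < n" "x i < c" "c < x j" and min: "\<forall>k<n. x i \<le> x k"
  defines "y \<equiv> x(i := c, j := x i * x j / c)"
  shows "GM' n y + 2 * AM n y < GM' n x + 2 * AM n x"
proof -
  have n: "0 < n" and "i \<noteq> j" using ij by auto
  have xi: "0 < x i" "x i < 1" and xj: "x j \<le> 1/2" using x ij by auto
  define d where "d = (c - x i) * (x j - c) / c"
  define t where "t = d / ((1 - x i) * (1 - x j))"
  have d: "0 < d" and t: "0 < t" using ij c xi xj by (simp_all add: d_def t_def)
  have "(\<Sum>k<n. y k) = c + x i * x j / c + (\<Sum>k\<in>{..<n} - {i} - {j}. x k)"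
    unfolding y_def by (rule sum_fun_upd_pair(1)) (use ij \<open>i \<noteq> j\<close> in auto)
  also have "x i * x j / c = x i + x j - c - d" using c by (simp add: d_def field_simps)
  also have "c + (x i + x j - c - d) + (\<Sum>k\<in>{..<n} - {i} - {j}. x k) = (\<Sum>k<n. x k) - d"
    using sum_fun_upd_pair(2)[where I = "{..<n}" and x = x] ij \<open>i \<noteq> j\<close> by simp
  finally have "AM n y = AM n x - d / real n" by (simp add: AM_def diff_divide_distrib)
  moreover have "GM' n y \<le> GM' n x * (1 + t / real n)"
    using prod_one_minus_geometric_move[OF ij(1,2) \<open>i \<noteq> j\<close>, of c x] c xi xj
    by (intro GM'_le_of_prod_growth[OF n less_imp_le[OF t]]) (simp add: y_def t_def d_def mult.assoc)
  moreover have "GM' n x * t < (1 - x i) * t"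
    using GM'_less_one_minus_min[of n x i j] x ij min t by force
  moreover have "(1 - x i) * t \<le> 2 * d"
  proof -
    have "(1 - x i) * t = d / (1 - x j)" using xi by (simp add: t_def)
    also have "\<dots> \<le> 2 * d" using xj d by (simp add: field_simps)
    finally show ?thesis .
  qed
  ultimately have "real n * (GM' n y + 2 * AM n y) < real n * (GM' n x + 2 * AM n x)"
    using n by (simp add: field_simps)
  then show ?thesis using n by simp
qed

lemma AM'_minus_GM'_less:
  fixes x :: "nat \<Rightarrow> real"
  assumes x: "\<forall>k<n. x k \<in> {0<..1/2}" and ne: "\<exists>i<n. \<exists>j<n. x i \<noteq> x j"
  shows "AM' n x - GM' n x < AM n x - GM n x"
proof -
  have n: "0 < n" using ne by auto
  have pos: "\<forall>k<n. 0 < x k" using x by auto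
  define c where "c = GM n x"
  have c: "0 < c" using GM_pos[OF pos] by (simp add: c_def)
  have "\<exists>y. (\<forall>k<n. y k = c) \<and> - (GM' n x + 2 * AM n x) < - (GM' n y + 2 * AM n y)"
  proof (rule geometric_smoothing_strict[of "{0<..1/2}"])
    fix z i j assume "\<forall>k<n. z k \<in> {0<..1/2}" "i < n" "j < n" "z i < c" "c < z j" "\<forall>k<n. z i \<le> z k"
    from GM'_plus_twice_AM_smoothing_less[OF this(1) c this(2-)] show "- (GM' n z + 2 * AM n z)
        < - (GM' n (z(i := c, j := z i * z j / c)) + 2 * AM n (z(i := c, j := z i * z j / c)))"
      by simp
  next
    show "(\<Prod>k<n. x k) = c ^ n" using GM_power[OF n pos] by (simp add: c_def)
  qed (use x c ne in auto)
  then obtain y where y: "\<forall>k<n. y k = c" and less: "GM' n y + 2 * AM n y < GM' n x + 2 * AM n x"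
    by auto
  have "c < 1" using GM_less_AM[OF pos ne] AM_le_half[OF n] x by (force simp: c_def)
  then have "GM' n y = 1 - c" "AM n y = c"
    using y n c by (simp_all add: GM'_def AM_def powr_power)
  then show ?thesis using less by (simp add: AM'_eq_one_minus_AM[OF n] c_def)
qed

section \<open>Hyperbolic estimates\<close>

lemma sinh_gt_self:
  fixes s :: real
  assumes "0 < s"
  shows "s < sinh s"
proof -
  have "(\<lambda>t. sinh t - t) 0 < (\<lambda>t. sinh t - t) s"
  proof (rule DERIV_pos_imp_increasing_open[OF assms])
    fix x :: real assume "0 < x" "x < s"
    then have "0 < cosh x - 1" using cosh_real_strict_mono[of 0 x] by simp
    moreover have "((\<lambda>t. sinh t - t) has_real_derivative (cosh x - 1)) (at x)"
      by (auto intro!: derivative_eq_intros)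
    ultimately show "\<exists>y. ((\<lambda>t. sinh t - t) has_real_derivative y) (at x) \<and> 0 < y" by blast
  qed (intro continuous_intros)
  then show ?thesis by simp
qed

lemma sinh_less_mult_cosh:
  fixes s :: real
  assumes "0 < s"
  shows "sinh s < s * cosh s"
proof -
  have "(\<lambda>t. t * cosh t - sinh t) 0 < (\<lambda>t. t * cosh t - sinh t) s"
  proof (rule DERIV_pos_imp_increasing_open[OF assms])
    fix x :: real assume "0 < x" "x < s"
    then have "0 < x * sinh x" by simp
    moreover have "((\<lambda>t. t * cosh t - sinh t) has_real_derivative (x * sinh x)) (at x)"
      by (auto intro!: derivative_eq_intros)
    ultimately show "\<exists>y. ((\<lambda>t. t * cosh t - sinh t) has_real_derivative y) (at x) \<and> 0 < y" by blast
  qed (intro continuous_intros)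
  then show ?thesis by simp
qed

lemma self_less_sinh_mult_cosh:
  fixes s :: real
  assumes "0 < s"
  shows "s < sinh s * cosh s"
  using sinh_gt_self[of "2 * s"] assms by (simp add: sinh_double)

lemma sinh_div_self_strict_mono:
  fixes a b :: real
  assumes "0 < b" "b < a"
  shows "sinh b / b < sinh a / a"
proof (rule DERIV_pos_imp_increasing[OF assms(2)])
  fix x :: real assume "b \<le> x" "x \<le> a"
  with assms have x: "0 < x" by simp
  have "0 < (x * cosh x - sinh x) / x\<^sup>2" using sinh_less_mult_cosh[OF x] x by simp
  moreover have "((\<lambda>t. sinh t / t) has_real_derivative ((x * cosh x - sinh x) / x\<^sup>2)) (at x)"
    using x by (auto intro!: derivative_eq_intros simp: field_simps power2_eq_square)
  ultimately show "\<exists>y. ((\<lambda>t. sinh t / t) has_real_derivative y) (at x) \<and> 0 < y" by blast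
qed

lemma sinh_ratio_less_ratio:
  fixes a b :: real
  assumes "0 < b" "b < a"
  shows "sinh b / sinh a < b / a"
  using sinh_div_self_strict_mono[OF assms] assms by (simp add: field_simps)

text \<open>With \<open>u = exp (t + s)\<close> and \<open>v = exp (t - s)\<close> one has
  \<open>ln (identric u v) = t + psi s\<close>.\<close>
definition psi :: "real \<Rightarrow> real" where
  "psi s = s * cosh s / sinh s - 1"

lemma psi_nonneg: "0 < s \<Longrightarrow> 0 \<le> psi s"
  using sinh_less_mult_cosh[of s] by (simp add: psi_def field_simps)

lemma psi_less_self:
  assumes s: "0 < s"
  shows "psi s < s"
proof -
  have "s * exp (- s) < s" using s by simp
  also have "\<dots> < sinh s" using sinh_gt_self[OF s] .
  finally have "s * cosh s < (1 + s) * sinh s"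
    by (simp add: algebra_simps flip: cosh_minus_sinh)
  then show ?thesis using s by (simp add: psi_def field_simps)
qed

lemma psi_strict_mono:
  fixes a b :: real
  assumes "0 < b" "b < a"
  shows "psi b < psi a"
proof -
  have "b * cosh b / sinh b < a * cosh a / sinh a"
  proof (rule DERIV_pos_imp_increasing[OF assms(2)])
    fix x :: real assume "b \<le> x" "x \<le> a"
    with assms have x: "0 < x" by simp
    then have sx: "0 < sinh x" by simp
    have "0 < (sinh x * cosh x - x) / (sinh x)\<^sup>2" using self_less_sinh_mult_cosh[OF x] sx by simp
    moreover have "((\<lambda>t. t * cosh t / sinh t) has_real_derivative
        ((sinh x * cosh x - x) / (sinh x)\<^sup>2)) (at x)"
      using sx by (auto intro!: derivative_eq_intros
          simp: field_simps power2_eq_square cosh_square_eq[unfolded power2_eq_square])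
    ultimately show "\<exists>y. ((\<lambda>t. t * cosh t / sinh t) has_real_derivative y) (at x) \<and> 0 < y"
      by blast
  qed
  then show ?thesis by (simp add: psi_def)
qed

lemma sinh_less_exp_mult_diff_psi:
  fixes a :: real
  assumes a: "0 < a"
  shows "sinh a < exp a * (a - psi a)"
proof -
  have sa: "0 < sinh a" using a by simp
  have "exp a * (a - psi a) * sinh a = (cosh a + sinh a) * (a * sinh a + sinh a - a * cosh a)"
    using sa by (simp add: psi_def field_simps flip: cosh_plus_sinh)
  also have "\<dots> = cosh a * sinh a + sinh a * sinh a - a * ((cosh a)\<^sup>2 - (sinh a)\<^sup>2)"
    by (simp add: algebra_simps power2_eq_square)
  also have "\<dots> > sinh a * sinh a"
    using self_less_sinh_mult_cosh[OF a] by (simp add: hyperbolic_pythagoras mult.commute)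
  finally show ?thesis using sa by simp
qed

lemma sinh_le_mult_exp:
  fixes a :: real
  assumes "0 < a"
  shows "sinh a \<le> a * exp a"
proof -
  have "0 \<le> a * sinh a" using assms by simp
  then show ?thesis
    using sinh_less_mult_cosh[OF assms] by (simp add: distrib_left flip: cosh_plus_sinh)
qed

text \<open>With \<open>c = a - psi a\<close> and \<open>d = D - a\<close>:
  \<open>D sinh a = a sinh a + d sinh a < a exp a (c + d) \<le> a exp D (c + d)\<close>, and
  \<open>D + psi b - psi a = c + d + psi b\<close> with \<open>b < sinh b\<close>.\<close>
lemma ratio_less_sinh_ratio_mult_psi_ratio:
  fixes a b D :: real
  assumes b: "0 < b" and ba: "b < a" and aD: "a \<le> D"
  shows "b / a < exp D * sinh b / sinh a * ((D + psi b - psi a) / D)"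
proof -
  have a: "0 < a" and D: "0 < D" using b ba aD by simp_all
  define c where "c = a - psi a"
  define d where "d = D - a"
  have c: "0 < c" using psi_less_self[OF a] by (simp add: c_def)
  have d: "0 \<le> d" using aD by (simp add: d_def)
  have "D * sinh a = a * sinh a + d * sinh a" by (simp add: d_def algebra_simps)
  also have "\<dots> < a * (exp a * c) + d * (a * exp a)"
    using sinh_less_exp_mult_diff_psi[OF a] sinh_le_mult_exp[OF a] a d
    by (intro add_less_le_mono mult_strict_left_mono mult_left_mono) (auto simp: c_def)
  also have "\<dots> = a * exp a * (c + d)" by (simp add: algebra_simps)
  also have "\<dots> \<le> a * exp D * (c + d)"
    using aD a c d by (intro mult_right_mono mult_left_mono) auto
  finally have "b * (D * sinh a) < b * (a * exp D * (c + d))" using b by simp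
  also have "\<dots> \<le> sinh b * (a * exp D * (c + d + psi b))"
    using sinh_gt_self[OF b] psi_nonneg[OF b] a b c d by (intro mult_mono) auto
  finally show ?thesis
    using a D by (simp add: c_def d_def field_simps)
qed

lemma hyperbolic_chain:
  fixes a b D N :: real
  assumes b: "0 < b" and ba: "b < a" and aD: "a \<le> D" and N: "1 \<le> N"
    and less: "exp D * sinh b < sinh a"
    and power_le: "sinh (N * a) \<le> exp (N * D) * sinh (N * b)"
  defines "Q \<equiv> exp D * sinh b / sinh a" and "R \<equiv> (D + psi b - psi a) / D"
    and "T \<equiv> exp (N * D) * sinh (N * b) / sinh (N * a)"
  shows "max (T * exp (- (N * D))) (Q * exp (- D)) < b / a
    \<and> b / a < Q * R \<and> Q * R < min Q R \<and> min Q R < 1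
    \<and> exp (2 * b) < exp (2 * b) powr (1 / R)
    \<and> exp (2 * b) powr (1 / R) < exp (2 * a) powr Q
    \<and> exp (2 * a) powr Q < exp (2 * a)
    \<and> exp (2 * a) < exp (2 * b) powr exp (N * D)
    \<and> T < exp (N * D) * (b / a) \<and> exp (N * D) * (b / a) < exp (N * D)"
proof -
  have a: "0 < a" and D: "0 < D" using b ba aD by simp_all
  have Nb: "0 < N * b" and Nba: "N * b < N * a" using b ba N by simp_all
  have sinh_N: "sinh (N * b) / sinh (N * a) < b / a"
    using sinh_ratio_less_ratio[OF Nb Nba] N by simp
  have Q: "0 < Q" "Q < 1" using less a b by (simp_all add: Q_def)
  have R: "0 < R" "R < 1"
    using psi_nonneg[OF b] psi_less_self[OF a] psi_strict_mono[OF b ba] aD D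
    by (simp_all add: R_def)
  have QR: "b / a < Q * R"
    using ratio_less_sinh_ratio_mult_psi_ratio[OF b ba aD] by (simp add: Q_def R_def)
  have "T * exp (- (N * D)) = sinh (N * b) / sinh (N * a)" "Q * exp (- D) = sinh b / sinh a"
    by (simp_all add: T_def Q_def exp_minus field_simps)
  then have "max (T * exp (- (N * D))) (Q * exp (- D)) < b / a"
    using sinh_N sinh_ratio_less_ratio[OF b ba] by simp
  moreover have "Q * R < min Q R" using Q R by (simp add: mult_less_cancel_left1 mult_less_cancel_right1)
  moreover have "exp (2 * b) < exp (2 * b) powr (1 / R)"
    using R b by (simp add: powr_def field_simps)
  moreover have "exp (2 * b) powr (1 / R) < exp (2 * a) powr Q"
    using QR R a by (simp add: powr_def field_simps)
  moreover have "exp (2 * a) powr Q < exp (2 * a)"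
    using Q a by (simp add: powr_def field_simps)
  moreover have "a < b * exp (N * D)"
  proof -
    have "a / b < sinh (N * a) / sinh (N * b)" using sinh_N Nb Nba a b by (simp add: field_simps)
    also have "\<dots> \<le> exp (N * D)" using power_le Nb by (simp add: field_simps)
    finally show ?thesis using b by (simp add: field_simps)
  qed
  then have "exp (2 * a) < exp (2 * b) powr exp (N * D)"
    by (simp add: powr_def mult.commute)
  moreover have "T < exp (N * D) * (b / a)"
    using mult_strict_left_mono[OF sinh_N exp_gt_zero] by (simp add: T_def)
  moreover have "exp (N * D) * (b / a) < exp (N * D)"
    using mult_strict_left_mono[of "b / a" 1 "exp (N * D)"] ba a by simp
  ultimately show ?thesis using QR Q by simp
qed

section \<open>The chain in exponential coordinates\<close>

lemma exp_coordinates: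
  fixes u v :: real
  assumes "0 < v" "v < u"
  obtains t s where "u = exp (t + s)" "v = exp (t - s)" "0 < s"
proof
  have "(ln u + ln v) / 2 + (ln u - ln v) / 2 = ln u" "(ln u + ln v) / 2 - (ln u - ln v) / 2 = ln v"
    by (simp_all add: field_simps)
  then show "u = exp ((ln u + ln v) / 2 + (ln u - ln v) / 2)"
    and "v = exp ((ln u + ln v) / 2 - (ln u - ln v) / 2)"
    using assms by simp_all
  show "0 < (ln u - ln v) / 2" using assms by simp
qed

lemma exp_add_minus_exp_diff: "exp (t + s) - exp (t - s) = 2 * exp t * sinh (s::real)"
  by (simp add: sinh_field_def exp_add exp_diff field_simps exp_minus)

lemma exp_add_plus_exp_diff: "exp (t + s) + exp (t - s) = 2 * exp t * cosh (s::real)"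
  by (simp add: cosh_field_def exp_add exp_diff field_simps exp_minus)

lemma exp_power_diff:
  "exp (t + s) ^ n - exp (t - s) ^ n = 2 * exp (real n * t) * sinh (real n * (s::real))"
  using exp_add_minus_exp_diff[of "real n * t" "real n * s"]
  by (simp add: algebra_simps flip: exp_of_nat_mult)

lemma identric_pos:
  assumes "0 < u" "0 < v"
  shows "0 < identric u v"
  using assms by (simp add: identric_def)

lemma ln_identric_exp:
  fixes s t :: real
  assumes s: "0 < s"
  shows "ln (identric (exp (t + s)) (exp (t - s))) = t + psi s"
proof -
  define u where "u = exp (t + s)"
  define v where "v = exp (t - s)"
  have uv: "u - v = 2 * exp t * sinh s" "u + v = 2 * exp t * cosh s"
    by (simp_all add: u_def v_def exp_add_minus_exp_diff exp_add_plus_exp_diff)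
  have "0 < u - v" unfolding uv(1) using s by simp
  then have "ln (identric u v) = -1 + (u * ln u - v * ln v) / (u - v)"
    by (simp add: identric_def u_def v_def ln_mult ln_div ln_powr)
  also have "u * ln u - v * ln v = t * (u - v) + s * (u + v)"
    by (simp add: u_def v_def algebra_simps)
  also have "-1 + (t * (u - v) + s * (u + v)) / (u - v) = t + psi s"
    using s by (simp add: uv psi_def field_simps)
  finally show ?thesis by (simp add: u_def v_def)
qed

lemma mean_chain_exp_coordinates:
  fixes m a m' b :: real and n :: nat
  defines "A \<equiv> exp (m + a)" and "G \<equiv> exp (m - a)" and "A' \<equiv> exp (m' + b)" and "G' \<equiv> exp (m' - b)"
    and "D \<equiv> m' - m"
  assumes b: "0 < b" and ba: "b < a" and aD: "a \<le> D" and n: "1 \<le> n"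
    and less: "exp D * sinh b < sinh a" and power_le: "sinh (n * a) \<le> exp (real n * D) * sinh (n * b)"
  shows "let R = ln (identric A' G' / identric A G) / ln (sqrt ((A' * G') / (A * G)))
         in max (((A' ^ n - G' ^ n) / (A ^ n - G ^ n)) * ((A * G) / (A' * G')) powr (real n / 2))
                (((A' - G') / (A - G)) * ((A * G) / (A' * G')) powr (1 / 2))
              < ln (A' / G') / ln (A / G)
          \<and> ln (A' / G') / ln (A / G) < ((A' - G') / (A - G)) * R
          \<and> ((A' - G') / (A - G)) * R < min ((A' - G') / (A - G)) R
          \<and> min ((A' - G') / (A - G)) R < 1
          \<and> A' / G' < (A' / G') powr (1 / R)
          \<and> (A' / G') powr (1 / R) < (A / G) powr ((A' - G') / (A - G))
          \<and> (A / G) powr ((A' - G') / (A - G)) < A / G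
          \<and> A / G < (A' / G') powr (((A' * G') / (A * G)) powr (real n / 2))
          \<and> (A' ^ n - G' ^ n) / (A ^ n - G ^ n)
              < ((A' * G') powr (real n / 2) * ln (A' / G')) / ((A * G) powr (real n / 2) * ln (A / G))
          \<and> ((A' * G') powr (real n / 2) * ln (A' / G')) / ((A * G) powr (real n / 2) * ln (A / G))
              < ((A' * G') / (A * G)) powr (real n / 2)"
proof -
  have a: "0 < a" using b ba by simp
  have m': "m' = D + m" by (simp add: D_def)
  have ratios: "A / G = exp (2 * a)" "A' / G' = exp (2 * b)"
    by (simp_all add: A_def G_def A'_def G'_def flip: exp_diff)
  have products: "(A' * G') / (A * G) = exp (2 * D)" "(A * G) / (A' * G') = exp (- (2 * D))"
    "A * G = exp (2 * m)" "A' * G' = exp (2 * m')"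
    by (simp_all add: A_def G_def A'_def G'_def D_def flip: exp_add exp_diff)
  have "ln (identric A' G' / identric A G) = D + psi b - psi a"
    using identric_pos[of A G] identric_pos[of A' G'] a b
    by (simp add: A_def G_def A'_def G'_def ln_div ln_identric_exp D_def)
  moreover have "ln (sqrt ((A' * G') / (A * G))) = D" by (simp add: products(1) ln_sqrt)
  ultimately have ln_R: "ln (identric A' G' / identric A G) / ln (sqrt ((A' * G') / (A * G)))
      = (D + psi b - psi a) / D" by simp
  have "(A' - G') / (A - G) = exp D * sinh b / sinh a"
    "(A' ^ n - G' ^ n) / (A ^ n - G ^ n) = exp (real n * D) * sinh (n * b) / sinh (n * a)"
    unfolding A_def G_def A'_def G'_def exp_add_minus_exp_diff exp_power_diff
    by (simp_all add: m' distrib_left exp_add)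
  moreover have "((A * G) / (A' * G')) powr (real n / 2) = exp (- (real n * D))"
    "((A * G) / (A' * G')) powr (1 / 2) = exp (- D)"
    "((A' * G') / (A * G)) powr (real n / 2) = exp (real n * D)"
    by (simp_all add: products(1,2) powr_def)
  moreover have "ln (A' / G') / ln (A / G) = b / a"
    "(A' * G') powr (real n / 2) * ln (A' / G') / ((A * G) powr (real n / 2) * ln (A / G))
      = exp (real n * D) * (b / a)"
    using a by (simp_all add: ratios products(3,4) powr_def) (simp add: m' distrib_left exp_add)
  ultimately show ?thesis
    using hyperbolic_chain[OF b ba aD _ less power_le] n
    unfolding Let_def ln_R by (simp only: ratios)
qed

lemma mean_chain:
  fixes A G A' G' :: real and n :: nat
  assumes GA: "0 < G" "G < A" and GA': "0 < G'" "G' < A'"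
    and AA: "A * A \<le> A' * G'" and ratio_less: "A' / G' < A / G" and diff_less: "A' - G' < A - G"
    and power_diff_le: "A ^ n - G ^ n \<le> A' ^ n - G' ^ n" and n: "1 \<le> n"
  shows "let R = ln (identric A' G' / identric A G) / ln (sqrt ((A' * G') / (A * G)))
         in max (((A' ^ n - G' ^ n) / (A ^ n - G ^ n)) * ((A * G) / (A' * G')) powr (real n / 2))
                (((A' - G') / (A - G)) * ((A * G) / (A' * G')) powr (1 / 2))
              < ln (A' / G') / ln (A / G)
          \<and> ln (A' / G') / ln (A / G) < ((A' - G') / (A - G)) * R
          \<and> ((A' - G') / (A - G)) * R < min ((A' - G') / (A - G)) R
          \<and> min ((A' - G') / (A - G)) R < 1
          \<and> A' / G' < (A' / G') powr (1 / R)
          \<and> (A' / G') powr (1 / R) < (A / G) powr ((A' - G') / (A - G))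
          \<and> (A / G) powr ((A' - G') / (A - G)) < A / G
          \<and> A / G < (A' / G') powr (((A' * G') / (A * G)) powr (real n / 2))
          \<and> (A' ^ n - G' ^ n) / (A ^ n - G ^ n)
              < ((A' * G') powr (real n / 2) * ln (A' / G')) / ((A * G) powr (real n / 2) * ln (A / G))
          \<and> ((A' * G') powr (real n / 2) * ln (A' / G')) / ((A * G) powr (real n / 2) * ln (A / G))
              < ((A' * G') / (A * G)) powr (real n / 2)"
proof -
  obtain m a where A: "A = exp (m + a)" and G: "G = exp (m - a)" and a: "0 < a"
    using exp_coordinates[OF GA] .
  obtain m' b where A': "A' = exp (m' + b)" and G': "G' = exp (m' - b)" and b: "0 < b"
    using exp_coordinates[OF GA'] .
  have "b < a" using ratio_less by (simp add: A G A' G' flip: exp_diff)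
  moreover have "a \<le> m' - m" using AA by (simp add: A A' G' flip: exp_add)
  moreover have "exp (m' - m) * sinh b < sinh a"
    using diff_less unfolding A G A' G' exp_add_minus_exp_diff by (simp add: exp_diff field_simps)
  moreover have "sinh (n * a) \<le> exp (n * (m' - m)) * sinh (n * b)"
    using power_diff_le unfolding A G A' G' exp_power_diff
    by (simp add: right_diff_distrib exp_diff field_simps)
  ultimately show ?thesis
    unfolding A G A' G' using mean_chain_exp_coordinates[OF b _ _ n] by blast
qed

theorem theorem4p2:
  fixes n :: nat and x :: "nat \<Rightarrow> real"
  assumes "n \<ge> 1"
    and "\<And>i. i < n \<Longrightarrow> 0 < x i \<and> x i \<le> 1 / 2"
    and "\<exists>i<n. \<exists>j<n. x i \<noteq> x j"
  shows "let A = AM n x; G = GM n x; A' = AM' n x; G' = GM' n x;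
             R = ln (identric A' G' / identric A G) / ln (sqrt ((A' * G') / (A * G)))
         in max (((A' ^ n - G' ^ n) / (A ^ n - G ^ n)) * ((A * G) / (A' * G')) powr (real n / 2))
                (((A' - G') / (A - G)) * ((A * G) / (A' * G')) powr (1 / 2))
              < ln (A' / G') / ln (A / G)
          \<and> ln (A' / G') / ln (A / G) < ((A' - G') / (A - G)) * R
          \<and> ((A' - G') / (A - G)) * R < min ((A' - G') / (A - G)) R
          \<and> min ((A' - G') / (A - G)) R < 1
          \<and> A' / G' < (A' / G') powr (1 / R)
          \<and> (A' / G') powr (1 / R) < (A / G) powr ((A' - G') / (A - G))
          \<and> (A / G) powr ((A' - G') / (A - G)) < A / G
          \<and> A / G < (A' / G') powr (((A' * G') / (A * G)) powr (real n / 2))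
          \<and> (A' ^ n - G' ^ n) / (A ^ n - G ^ n)
              < ((A' * G') powr (real n / 2) * ln (A' / G')) / ((A * G) powr (real n / 2) * ln (A / G))
          \<and> ((A' * G') powr (real n / 2) * ln (A' / G')) / ((A * G) powr (real n / 2) * ln (A / G))
              < ((A' * G') / (A * G)) powr (real n / 2)"
proof -
  have n: "0 < n" using assms(1) by simp
  have x: "\<forall>k<n. x k \<in> {0<..1/2}" using assms(2) by auto
  have pos: "\<forall>k<n. 0 < x k" "\<forall>k<n. 0 < 1 - x k" using x by auto
  have ne: "\<exists>i<n. \<exists>j<n. x i \<noteq> x j" "\<exists>i<n. \<exists>j<n. 1 - x i \<noteq> 1 - x j" using assms(3) by auto
  have G: "0 < GM n x" "0 < GM' n x"
    using GM_pos[OF pos(1)] GM_pos[OF pos(2)] by (simp_all add: GM'_eq_GM)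
  have G_less_A: "GM n x < AM n x" using GM_less_AM[OF pos(1) ne(1)] .
  have G'_less_A': "GM' n x < AM' n x"
    using GM_less_AM[OF pos(2) ne(2)] by (simp add: GM'_eq_GM AM'_eq_AM)
  have "AM n x * AM n x \<le> AM' n x * GM' n x"
  proof (rule mult_mono)
    have "AM n x \<le> 1/2" using AM_le_half[OF n] x by force
    then show "AM n x \<le> AM' n x" "AM n x \<le> GM' n x"
      using half_le_GM'[OF n x] G'_less_A' by linarith+
  qed (use G G_less_A G'_less_A' in linarith)+
  then show ?thesis
    using mean_chain[OF G(1) G_less_A G(2) G'_less_A' _
        AM'_div_GM'_less[OF x ne(1)] AM'_minus_GM'_less[OF x ne(1)] AM_power_diff_le[OF n x] assms(1)]
    by (simp add: Let_def)
qed

end
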